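(* Let $X,Y,A,B$ be non-empty finite sets. Then $\mathsf{QC}(\mathcal R_{\rm loc})=\mathcal Q_{\rm loc}$.
   Context: For a block operator isometry $W=(W_{c,z})_{c\in C,z\in Z}:H^Z\to K^C$ (entries $W_{c,z}\in\mathcal B(H,K)$) and a normal state $\sigma$ on $\mathcal B(H)$, $\Gamma_{W,\sigma}:M_Z\to M_C$ is the channel $\Gamma_{W,\sigma}(\epsilon_{z,z'})=\sum_{c,c'}\sigma(W_{c,z}^*W_{c',z'})\epsilon_{c,c'}$; for a family $\mathcal R$, $\mathsf{QC}(\mathcal R)=\{\Gamma_{W,\sigma}:W\in\mathcal R,\sigma\text{ normal state}\}$. An isometry $U:\mathbb C^X\to\mathbb C^A\otimes\mathbb C^S$ ($S$ finite) is regarded as a block operator isometry over $(X,A)$ with entries $U_{a,x}\in\mathcal B(\mathbb C,\mathbb C^S)$ determined by $Ue_x=\sum_a e_a\otimes U_{a,x}$; similarly $V:\mathbb C^Y\to\mathbb C^B\otimes\mathbb C^T$. Then $U\otimes V$ is the block operator isometry over $(X\times Y,A\times B)$ with entries $U_{a,x}\otimes V_{b,y}$. $\mathcal R_{\rm loc}$ is the set of all finite direct sums (entrywise) of such $U\otimes V$, over all finite sets $S,T$ and all isometries $U,V$. $\mathcal Q_{\rm loc}$ is the set of convex combinations $\sum_i\lambda_i\Phi_i\otimes\Psi_i$, where $\Phi_i:M_X\to M_A$ and $\Psi_i:M_Y\to M_B$ are quantum channels (completely positive trace preserving maps). *)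

theory Defs
  imports Complex_Main
begin

definition matunit :: "'i \<Rightarrow> 'i \<Rightarrow> ('i \<Rightarrow> 'i \<Rightarrow> complex)" where
  "matunit x x' = (\<lambda>i j. if i = x \<and> j = x' then 1 else 0)"

definition psd_on :: "'i set \<Rightarrow> ('i \<Rightarrow> 'i \<Rightarrow> complex) \<Rightarrow> bool" where
  "psd_on I M \<longleftrightarrow> (\<forall>v :: 'i \<Rightarrow> complex.
     (\<Sum>i\<in>I. \<Sum>j\<in>I. cnj (v i) * M i j * v j) \<in> \<real> \<and>
     0 \<le> Re (\<Sum>i\<in>I. \<Sum>j\<in>I. cnj (v i) * M i j * v j))"

definition lin_map :: "(('x \<Rightarrow> 'x \<Rightarrow> complex) \<Rightarrow> ('a \<Rightarrow> 'a \<Rightarrow> complex)) \<Rightarrow> bool" where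
  "lin_map \<Phi> \<longleftrightarrow> (\<forall>M N. \<Phi> (\<lambda>i j. M i j + N i j) = (\<lambda>i j. \<Phi> M i j + \<Phi> N i j)) \<and>
                   (\<forall>c M. \<Phi> (\<lambda>i j. c * M i j) = (\<lambda>i j. c * \<Phi> M i j))"

text \<open>Amplification \<Phi> \<otimes> id_{M_n}, block indices k < n.\<close>
definition ampl :: "(('x \<Rightarrow> 'x \<Rightarrow> complex) \<Rightarrow> ('a \<Rightarrow> 'a \<Rightarrow> complex))
    \<Rightarrow> ('x \<times> nat \<Rightarrow> 'x \<times> nat \<Rightarrow> complex) \<Rightarrow> ('a \<times> nat \<Rightarrow> 'a \<times> nat \<Rightarrow> complex)" where
  "ampl \<Phi> M = (\<lambda>(a, k) (a', k'). \<Phi> (\<lambda>x x'. M (x, k) (x', k')) a a')"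

definition compl_pos :: "(('x::finite \<Rightarrow> 'x \<Rightarrow> complex) \<Rightarrow> ('a::finite \<Rightarrow> 'a \<Rightarrow> complex)) \<Rightarrow> bool" where
  "compl_pos \<Phi> \<longleftrightarrow> (\<forall>n::nat. \<forall>M. psd_on (UNIV \<times> {..<n}) M \<longrightarrow>
       psd_on (UNIV \<times> {..<n}) (ampl \<Phi> M))"

definition trace_pres :: "(('x::finite \<Rightarrow> 'x \<Rightarrow> complex) \<Rightarrow> ('a::finite \<Rightarrow> 'a \<Rightarrow> complex)) \<Rightarrow> bool" where
  "trace_pres \<Phi> \<longleftrightarrow> (\<forall>M. (\<Sum>a\<in>UNIV. \<Phi> M a a) = (\<Sum>x\<in>UNIV. M x x))"

definition quantum_channel :: "(('x::finite \<Rightarrow> 'x \<Rightarrow> complex) \<Rightarrow> ('a::finite \<Rightarrow> 'a \<Rightarrow> complex)) \<Rightarrow> bool" where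
  "quantum_channel \<Phi> \<longleftrightarrow> lin_map \<Phi> \<and> compl_pos \<Phi> \<and> trace_pres \<Phi>"

text \<open>Tensor product of maps, defined on product matrix units and extended linearly.\<close>
definition map_tensor ::
  "(('x::finite \<Rightarrow> 'x \<Rightarrow> complex) \<Rightarrow> ('a \<Rightarrow> 'a \<Rightarrow> complex))
   \<Rightarrow> (('y::finite \<Rightarrow> 'y \<Rightarrow> complex) \<Rightarrow> ('b \<Rightarrow> 'b \<Rightarrow> complex))
   \<Rightarrow> ('x \<times> 'y \<Rightarrow> 'x \<times> 'y \<Rightarrow> complex) \<Rightarrow> ('a \<times> 'b \<Rightarrow> 'a \<times> 'b \<Rightarrow> complex)" where
  "map_tensor \<Phi> \<Psi> M = (\<lambda>(a, b) (a', b').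
     \<Sum>x\<in>UNIV. \<Sum>x'\<in>UNIV. \<Sum>y\<in>UNIV. \<Sum>y'\<in>UNIV.
       M (x, y) (x', y') * \<Phi> (matunit x x') a a' * \<Psi> (matunit y y') b b')"

definition Q_loc ::
  "(('x::finite \<times> 'y::finite \<Rightarrow> 'x \<times> 'y \<Rightarrow> complex) \<Rightarrow> ('a::finite \<times> 'b::finite \<Rightarrow> 'a \<times> 'b \<Rightarrow> complex)) set" where
  "Q_loc = {\<Gamma>. \<exists>(n::nat) (w::nat \<Rightarrow> real) \<Phi> \<Psi>.
      (\<forall>i<n. 0 \<le> w i \<and> quantum_channel (\<Phi> i) \<and> quantum_channel (\<Psi> i)) \<and>
      (\<Sum>i<n. w i) = 1 \<and>
      \<Gamma> = (\<lambda>M c c'. \<Sum>i<n. complex_of_real (w i) * map_tensor (\<Phi> i) (\<Psi> i) M c c')}"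

text \<open>Block operator W = (W_{c,z}) with W_{c,z} in B(C^H, C^K), stored as K x H matrices
  (W c z k h). A normal state on B(C^H) (H finite) is sigma(N) = tr(rho N) for a density matrix rho.
  Gamma_{W,sigma}(eps_{z,z'}) = sum_{c,c'} sigma(W_{c,z}^* W_{c',z'}) eps_{c,c'}, extended linearly.\<close>
definition gammaW :: "'k set \<Rightarrow> 'h set \<Rightarrow> ('c \<Rightarrow> 'z::finite \<Rightarrow> 'k \<Rightarrow> 'h \<Rightarrow> complex)
    \<Rightarrow> ('h \<Rightarrow> 'h \<Rightarrow> complex) \<Rightarrow> ('z \<Rightarrow> 'z \<Rightarrow> complex) \<Rightarrow> ('c \<Rightarrow> 'c \<Rightarrow> complex)" where
  "gammaW K H W \<rho> M = (\<lambda>c c'. \<Sum>z\<in>UNIV. \<Sum>z'\<in>UNIV. M z z' *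
      (\<Sum>h\<in>H. \<Sum>h'\<in>H. \<rho> h h' * (\<Sum>k\<in>K. cnj (W c z k h') * W c' z' k h)))"

definition density_on :: "'h set \<Rightarrow> ('h \<Rightarrow> 'h \<Rightarrow> complex) \<Rightarrow> bool" where
  "density_on H \<rho> \<longleftrightarrow> psd_on H \<rho> \<and> (\<Sum>h\<in>H. \<rho> h h) = 1"

text \<open>Isometry U : C^X \<rightarrow> C^A \<otimes> C^S, U e_x = sum_a e_a \<otimes> (sum_{s in S} u a s x e_s).\<close>
definition isometry_on :: "nat set \<Rightarrow> ('a::finite \<Rightarrow> nat \<Rightarrow> 'x::finite \<Rightarrow> complex) \<Rightarrow> bool" where
  "isometry_on S u \<longleftrightarrow> (\<forall>x x'. (\<Sum>a\<in>UNIV. \<Sum>s\<in>S. cnj (u a s x) * u a s x') =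
       (if x = x' then 1 else 0))"

text \<open>Direct sum over i < n of U_i \<otimes> V_i: H = C^{n}, K = \<oplus>_i C^{S_i} \<otimes> C^{T_i}.\<close>
definition dsum_K :: "nat \<Rightarrow> (nat \<Rightarrow> nat set) \<Rightarrow> (nat \<Rightarrow> nat set) \<Rightarrow> (nat \<times> nat \<times> nat) set" where
  "dsum_K n S T = {(i, s, t). i < n \<and> s \<in> S i \<and> t \<in> T i}"

definition dsum_W :: "(nat \<Rightarrow> 'a \<Rightarrow> nat \<Rightarrow> 'x \<Rightarrow> complex) \<Rightarrow> (nat \<Rightarrow> 'b \<Rightarrow> nat \<Rightarrow> 'y \<Rightarrow> complex)
    \<Rightarrow> ('a \<times> 'b) \<Rightarrow> ('x \<times> 'y) \<Rightarrow> (nat \<times> nat \<times> nat) \<Rightarrow> nat \<Rightarrow> complex" where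
  "dsum_W u v = (\<lambda>(a, b) (x, y) (i, s, t) j.
      if i = j then u i a s x * v i b t y else 0)"

definition QC_Rloc ::
  "(('x::finite \<times> 'y::finite \<Rightarrow> 'x \<times> 'y \<Rightarrow> complex) \<Rightarrow> ('a::finite \<times> 'b::finite \<Rightarrow> 'a \<times> 'b \<Rightarrow> complex)) set" where
  "QC_Rloc = {gammaW (dsum_K n S T) {..<n} (dsum_W u v) \<rho> | n S T u v \<rho>.
      (\<forall>i<n. finite (S i) \<and> finite (T i) \<and> isometry_on (S i) (u i) \<and> isometry_on (T i) (v i))
      \<and> density_on {..<n} \<rho>}"

end

theory Submission
  imports Defs
begin

text \<open>The blocks of a direct sum of local isometries \<open>U\<^sub>i \<otimes> V\<^sub>i\<close> are mutually orthogonal, so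
  \<open>\<Gamma>\<^sub>W\<^sub>,\<^sub>\<sigma>\<close> only sees the diagonal of the density matrix and equals
  \<open>\<Sum>\<^sub>i \<sigma>\<^sub>i\<^sub>i \<Phi>\<^sub>U\<^sub>i \<otimes> \<Phi>\<^sub>V\<^sub>i\<close>, where the Kraus map \<open>\<Phi>\<^sub>U\<close> of an isometry is a channel.
  Conversely, every channel is the Kraus map of an isometry: complete positivity makes its Choi
  matrix positive semidefinite, a Gram factorisation of the Choi matrix (built by repeatedly
  passing to a Schur complement) yields the Kraus operators, and trace preservation says that
  they form an isometry. A convex combination \<open>\<Sum>\<^sub>i \<lambda>\<^sub>i \<Phi>\<^sub>i \<otimes> \<Psi>\<^sub>i\<close> is then realised with
  the diagonal state \<open>diag(\<lambda>)\<close>.\<close>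

section \<open>Positive semidefinite matrices\<close>

definition qform :: "'i set \<Rightarrow> ('i \<Rightarrow> 'i \<Rightarrow> complex) \<Rightarrow> ('i \<Rightarrow> complex) \<Rightarrow> complex" where
  "qform I M v = (\<Sum>i\<in>I. \<Sum>j\<in>I. cnj (v i) * M i j * v j)"

lemma psd_on_iff_qform: "psd_on I M \<longleftrightarrow> (\<forall>v. qform I M v \<in> \<real> \<and> 0 \<le> Re (qform I M v))"
  unfolding psd_on_def qform_def ..

lemma psd_on_qformD:
  assumes "psd_on I M"
  shows "qform I M v \<in> \<real>" "0 \<le> Re (qform I M v)"
  using assms unfolding psd_on_iff_qform by blast+

lemma qform_supported:
  assumes "finite I" "J \<subseteq> I" "\<And>i. i \<in> I - J \<Longrightarrow> v i = 0"
  shows "qform I C v = qform J C v"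
proof -
  have "qform I C v = (\<Sum>i\<in>J. \<Sum>j\<in>I. cnj (v i) * C i j * v j)"
    unfolding qform_def using assms by (intro sum.mono_neutral_right) auto
  also have "\<dots> = qform J C v"
    unfolding qform_def using assms by (intro sum.cong refl sum.mono_neutral_right) auto
  finally show ?thesis .
qed

lemma qform_one_point:
  assumes "finite I" "p \<in> I"
  shows "qform I C (\<lambda>j. if j = p then \<alpha> else 0) = cnj \<alpha> * C p p * \<alpha>"
  using assms by (subst qform_supported[where J = "{p}"]) (auto simp: qform_def)

lemma qform_two_points:
  assumes "finite I" "p \<in> I" "q \<in> I" "p \<noteq> q"
  shows "qform I C (\<lambda>j. if j = p then \<alpha> else if j = q then \<beta> else 0)
       = cnj \<alpha> * C p p * \<alpha> + cnj \<alpha> * C p q * \<beta> + cnj \<beta> * C q p * \<alpha> + cnj \<beta> * C q q * \<beta>"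
  using assms by (subst qform_supported[where J = "{p, q}"]) (auto simp: qform_def)

lemma qform_insert:
  assumes "finite I" "i \<notin> I"
  shows "qform (insert i I) C v = cnj (v i) * C i i * v i + cnj (v i) * (\<Sum>b\<in>I. C i b * v b)
           + (\<Sum>a\<in>I. cnj (v a) * C a i) * v i + qform I C v"
  using assms by (simp add: qform_def sum.distrib sum_distrib_left sum_distrib_right algebra_simps)

lemma qform_diag:
  assumes "finite I"
  shows "qform I (\<lambda>h h'. if h = h' then d h else 0) v = (\<Sum>i\<in>I. d i * cnj (v i) * v i)"
  unfolding qform_def
proof (intro sum.cong refl)
  fix i assume "i \<in> I"
  have "(\<Sum>j\<in>I. cnj (v i) * (if i = j then d i else 0) * v j)
      = (\<Sum>j\<in>I. if i = j then cnj (v i) * d i * v j else 0)"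
    by (intro sum.cong) auto
  then show "(\<Sum>j\<in>I. cnj (v i) * (if i = j then d i else 0) * v j) = d i * cnj (v i) * v i"
    using assms \<open>i \<in> I\<close> by (simp add: mult_ac)
qed

lemma psd_on_diag:
  assumes "finite I" "psd_on I C" "p \<in> I"
  shows "C p p \<in> \<real>" "0 \<le> Re (C p p)"
  using psd_on_qformD[OF assms(2), of "\<lambda>j. if j = p then 1 else 0"]
  by (simp_all add: qform_one_point[OF assms(1,3)])

lemma psd_on_hermitian:
  assumes "finite I" "psd_on I C" "p \<in> I" "q \<in> I"
  shows "C p q = cnj (C q p)"
proof (cases "p = q")
  case True
  then show ?thesis using psd_on_diag[OF assms(1-3)] by (simp add: Reals_cnj_iff)
next
  case False
  have "C p p + C p q + C q p + C q q \<in> \<real>"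
    using psd_on_qformD(1)[OF assms(2), of "\<lambda>j. if j = p then 1 else if j = q then 1 else 0"]
    by (simp add: qform_two_points[OF assms(1,3,4) False])
  moreover have "C p p + \<i> * C p q - \<i> * C q p + C q q \<in> \<real>"
    using psd_on_qformD(1)[OF assms(2), of "\<lambda>j. if j = p then 1 else if j = q then \<i> else 0"]
    by (simp add: qform_two_points[OF assms(1,3,4) False] algebra_simps)
  moreover have "C p p \<in> \<real>" "C q q \<in> \<real>"
    using psd_on_diag(1)[OF assms(1,2)] assms(3,4) by auto
  ultimately show ?thesis by (simp add: complex_is_Real_iff complex_eq_iff)
qed

lemma psd_on_zero_diag_row:
  assumes "finite I" "psd_on I C" "p \<in> I" "q \<in> I" "C p p = 0"
  shows "C p q = 0"
proof (rule ccontr)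
  assume nz: "C p q \<noteq> 0"
  then have "p \<noteq> q" using assms(5) by auto
  define z where "z = C p q"
  define n where "n = (cmod z)\<^sup>2"
  have "n > 0" using nz by (simp add: n_def z_def)
  define t where "t = (Re (C q q) + 1) / (2 * n)"
  define \<alpha> where "\<alpha> = - complex_of_real t * z"
  have "C q p = cnj z" using psd_on_hermitian[OF assms(1,2,4,3)] by (simp add: z_def)
  moreover have "cnj z * z = complex_of_real n"
    unfolding n_def by (simp add: complex_norm_square[symmetric] mult.commute)
  ultimately have "qform I C (\<lambda>j. if j = p then \<alpha> else if j = q then 1 else 0)
      = C q q - 2 * complex_of_real (t * n)"
    using assms(5) by (simp add: qform_two_points[OF assms(1,3,4) \<open>p \<noteq> q\<close>] \<alpha>_def z_def algebra_simps)
  then have "Re (qform I C (\<lambda>j. if j = p then \<alpha> else if j = q then 1 else 0))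
      = Re (C q q) - 2 * (t * n)"
    by simp
  also have "\<dots> = -1"
    using \<open>n > 0\<close> by (simp add: t_def field_simps)
  finally show False using psd_on_qformD(2)[OF assms(2)] by (metis neg_0_le_iff_le not_one_le_zero)
qed

text \<open>When C i i = 0 the quotient is 0, so the matrix is then just the restriction of C.\<close>
lemma psd_on_schur_complement:
  assumes "finite I" "i \<notin> I" "psd_on (insert i I) C"
  shows "psd_on I (\<lambda>p q. C p q - C p i * C i q / C i i)"
  unfolding psd_on_iff_qform
proof
  fix v :: "'a \<Rightarrow> complex"
  define c where "c = C i i"
  define L where "L = (\<Sum>b\<in>I. C i b * v b)"
  define t where "t = - L / c"
  have fin: "finite (insert i I)" using assms(1) by simp
  have "cnj c = c"
    using psd_on_diag(1)[OF fin assms(3)] by (simp add: c_def Reals_cnj_iff)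
  have "C a i = cnj (C i a)" if "a \<in> I" for a
    using psd_on_hermitian[OF fin assms(3)] that by blast
  then have col: "(\<Sum>a\<in>I. cnj (v a) * C a i) = cnj L"
    unfolding L_def cnj_sum by (intro sum.cong refl) simp
  have "qform (insert i I) C (v(i := t)) = cnj t * c * t + cnj t * L + cnj L * t + qform I C v"
  proof -
    have "qform I C (v(i := t)) = qform I C v"
      unfolding qform_def using assms(2) by (auto intro!: sum.cong)
    moreover have "(\<Sum>b\<in>I. C i b * (v(i := t)) b) = L"
      unfolding L_def using assms(2) by (auto intro!: sum.cong)
    moreover have "(\<Sum>a\<in>I. cnj ((v(i := t)) a) * C a i) = cnj L"
      unfolding col[symmetric] using assms(2) by (intro sum.cong) auto
    ultimately show ?thesis by (simp add: qform_insert[OF assms(1,2)] c_def)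
  qed
  also have "cnj t * c * t + cnj t * L + cnj L * t = - cnj L * L / c"
    using \<open>cnj c = c\<close> by (cases "c = 0") (simp_all add: t_def divide_simps)
  also have "- cnj L * L / c + qform I C v = qform I (\<lambda>p q. C p q - C p i * C i q / C i i) v"
  proof -
    have "qform I (\<lambda>p q. C p q - C p i * C i q / C i i) v
        = (\<Sum>a\<in>I. \<Sum>b\<in>I. cnj (v a) * C a b * v b - (cnj (v a) * C a i) * (C i b * v b) / c)"
      unfolding qform_def c_def by (simp add: algebra_simps)
    also have "\<dots> = qform I C v - (\<Sum>a\<in>I. \<Sum>b\<in>I. (cnj (v a) * C a i) * (C i b * v b)) / c"
      by (simp add: qform_def sum_subtractf sum_divide_distrib)
    also have "(\<Sum>a\<in>I. \<Sum>b\<in>I. (cnj (v a) * C a i) * (C i b * v b)) = (\<Sum>a\<in>I. cnj (v a) * C a i) * L"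
      unfolding L_def by (simp add: sum_product)
    finally show ?thesis by (simp add: col)
  qed
  finally show "qform I (\<lambda>p q. C p q - C p i * C i q / C i i) v \<in> \<real> \<and>
      0 \<le> Re (qform I (\<lambda>p q. C p q - C p i * C i q / C i i) v)"
    using psd_on_qformD[OF assms(3)] by metis
qed

lemma psd_on_gram_factorization:
  assumes "finite I" "psd_on I C"
  shows "\<exists>(m::nat) g. \<forall>p\<in>I. \<forall>q\<in>I. C p q = (\<Sum>s<m. cnj (g s p) * g s q)"
  using assms
proof (induction I arbitrary: C rule: finite_induct)
  case empty
  then show ?case by auto
next
  case (insert i I C)
  let ?J = "insert i I"
  define c where "c = C i i"
  define C' where "C' = (\<lambda>p q. C p q - C p i * C i q / c)"
  have fin: "finite ?J" using insert.hyps by simp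
  have herm: "C p q = cnj (C q p)" if "p \<in> ?J" "q \<in> ?J" for p q
    using psd_on_hermitian[OF fin insert.prems] that by blast
  obtain m :: nat and g where g: "\<forall>p\<in>I. \<forall>q\<in>I. C' p q = (\<Sum>s<m. cnj (g s p) * g s q)"
    using insert.IH psd_on_schur_complement[OF insert.hyps insert.prems] unfolding C'_def c_def by blast
  have C'_cross: "C' p q = 0" if "p \<in> ?J" "q \<in> ?J" "p = i \<or> q = i" for p q
  proof (cases "c = 0")
    case True
    have row: "C i x = 0" if "x \<in> ?J" for x
      using psd_on_zero_diag_row[OF fin insert.prems _ that] True by (simp add: c_def)
    moreover have "C x i = 0" if "x \<in> ?J" for x
      using herm[OF that insertI1] row[OF that] by simp
    ultimately show ?thesis using that by (auto simp: C'_def)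
  qed (use that in \<open>auto simp: C'_def c_def\<close>)
  text \<open>The rank-one part removed by the Schur complement is the Gram matrix of \<open>r\<close>; if
    \<open>c = 0\<close>, both are zero because division by zero yields zero.\<close>
  define r where "r = (\<lambda>q. C i q / sqrt (Re c))"
  have "c = complex_of_real (Re c)" "0 \<le> Re c"
    using psd_on_diag[OF fin insert.prems] by (auto simp: c_def complex_is_Real_iff complex_eq_iff)
  then have r: "cnj (r p) * r q = C p i * C i q / c" if "p \<in> ?J" for p q
    using herm[OF insertI1 that] by (simp add: r_def flip: of_real_mult)
  define g' where "g' = (\<lambda>s p. if s < m then (if p = i then 0 else g s p) else r p)"
  have "C p q = (\<Sum>s<Suc m. cnj (g' s p) * g' s q)" if "p \<in> ?J" "q \<in> ?J" for p q
  proof -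
    have "(\<Sum>s<Suc m. cnj (g' s p) * g' s q)
        = (if p = i \<or> q = i then 0 else \<Sum>s<m. cnj (g s p) * g s q) + cnj (r p) * r q"
      by (simp add: g'_def)
    also have "\<dots> = C' p q + C p i * C i q / c"
      using g that C'_cross r by auto
    finally show ?thesis by (simp add: C'_def)
  qed
  then show ?case by blast
qed

lemma psd_on_rank_one: "psd_on I (\<lambda>i j. cnj (w i) * w j)"
  unfolding psd_on_iff_qform
proof
  fix v :: "'a \<Rightarrow> complex"
  define T where "T = (\<Sum>j\<in>I. w j * v j)"
  have "qform I (\<lambda>i j. cnj (w i) * w j) v = cnj T * T"
    unfolding qform_def T_def cnj_sum sum_product by (simp add: mult_ac)
  also have "\<dots> = complex_of_real ((cmod T)\<^sup>2)"
    by (simp add: complex_norm_square[symmetric] mult.commute)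
  finally show "qform I (\<lambda>i j. cnj (w i) * w j) v \<in> \<real> \<and> 0 \<le> Re (qform I (\<lambda>i j. cnj (w i) * w j) v)"
    by simp
qed

lemma psd_on_reindex:
  assumes "psd_on J M" "bij_betw h I J"
  shows "psd_on I (\<lambda>i j. M (h i) (h j))"
  unfolding psd_on_iff_qform
proof
  fix v
  have "qform I (\<lambda>i j. M (h i) (h j)) v = qform J M (v \<circ> inv_into I h)"
    unfolding qform_def
    using bij_betw_inv_into_left[OF assms(2)]
    by (simp add: sum.reindex_bij_betw[OF assms(2), symmetric])
  then show "qform I (\<lambda>i j. M (h i) (h j)) v \<in> \<real> \<and> 0 \<le> Re (qform I (\<lambda>i j. M (h i) (h j)) v)"
    using psd_on_qformD[OF assms(1)] by simp
qed

lemma density_on_diag: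
  fixes n :: nat
  assumes "\<forall>i<n. 0 \<le> w i" "(\<Sum>i<n. w i) = 1"
  shows "density_on {..<n} (\<lambda>h h'. if h = h' then complex_of_real (w h) else 0)"
  unfolding density_on_def psd_on_iff_qform qform_diag[OF finite_lessThan]
proof (intro conjI allI)
  fix v :: "nat \<Rightarrow> complex"
  have "(\<Sum>i<n. complex_of_real (w i) * cnj (v i) * v i) = complex_of_real (\<Sum>i<n. w i * (cmod (v i))\<^sup>2)"
    unfolding of_real_sum
    by (intro sum.cong refl) (simp add: complex_norm_square[symmetric] mult_ac)
  moreover have "0 \<le> (\<Sum>i<n. w i * (cmod (v i))\<^sup>2)"
    using assms(1) by (intro sum_nonneg) simp
  ultimately show "(\<Sum>i<n. complex_of_real (w i) * cnj (v i) * v i) \<in> \<real>"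
    "0 \<le> Re (\<Sum>i<n. complex_of_real (w i) * cnj (v i) * v i)"
    by simp_all
next
  show "(\<Sum>h<n. if h = h then complex_of_real (w h) else 0) = 1"
    using assms(2) by (simp flip: of_real_sum)
qed

section \<open>Linear maps and Kraus maps\<close>

lemma lin_map_add: "lin_map \<Phi> \<Longrightarrow> \<Phi> (\<lambda>i j. M i j + N i j) = (\<lambda>a a'. \<Phi> M a a' + \<Phi> N a a')"
  unfolding lin_map_def by blast

lemma lin_map_scale: "lin_map \<Phi> \<Longrightarrow> \<Phi> (\<lambda>i j. c * M i j) = (\<lambda>a a'. c * \<Phi> M a a')"
  unfolding lin_map_def by blast

lemma lin_map_zero: "lin_map \<Phi> \<Longrightarrow> \<Phi> (\<lambda>i j. 0) = (\<lambda>a a'. 0)"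
  using lin_map_scale[of \<Phi> 0 "\<lambda>i j. 0"] by simp

lemma lin_map_sum:
  assumes "lin_map \<Phi>" "finite F"
  shows "\<Phi> (\<lambda>i j. \<Sum>k\<in>F. f k i j) = (\<lambda>a a'. \<Sum>k\<in>F. \<Phi> (f k) a a')"
  using assms(2)
proof (induction F rule: finite_induct)
  case empty
  then show ?case using lin_map_zero[OF assms(1)] by simp
next
  case (insert k F)
  then show ?case
    using lin_map_add[OF assms(1), of "f k" "\<lambda>i j. \<Sum>k\<in>F. f k i j"] by simp
qed

lemma sum_matunit_mult:
  fixes f :: "'x::finite \<Rightarrow> 'x \<Rightarrow> complex"
  shows "(\<Sum>x\<in>UNIV. \<Sum>x'\<in>UNIV. matunit a b x x' * f x x') = f a b"
  by (simp add: matunit_def of_bool_def[symmetric] of_bool_conj mult.assoc sum_distrib_left[symmetric])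

lemma lin_map_matunit_expansion:
  fixes \<Phi> :: "('x::finite \<Rightarrow> 'x \<Rightarrow> complex) \<Rightarrow> ('a \<Rightarrow> 'a \<Rightarrow> complex)"
  assumes "lin_map \<Phi>"
  shows "\<Phi> M = (\<lambda>a a'. \<Sum>x\<in>UNIV. \<Sum>x'\<in>UNIV. M x x' * \<Phi> (matunit x x') a a')"
proof -
  have "M = (\<lambda>i j. \<Sum>x\<in>UNIV. \<Sum>x'\<in>UNIV. M x x' * matunit x x' i j)"
  proof (intro ext)
    fix i j
    have "M i j = (\<Sum>x\<in>UNIV. \<Sum>x'\<in>UNIV. matunit i j x x' * M x x')"
      by (rule sum_matunit_mult[symmetric])
    also have "\<dots> = (\<Sum>x\<in>UNIV. \<Sum>x'\<in>UNIV. M x x' * matunit x x' i j)"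
      by (intro sum.cong refl) (auto simp: matunit_def)
    finally show "M i j = (\<Sum>x\<in>UNIV. \<Sum>x'\<in>UNIV. M x x' * matunit x x' i j)" .
  qed
  then have "\<Phi> M = \<Phi> (\<lambda>i j. \<Sum>x\<in>UNIV. \<Sum>x'\<in>UNIV. M x x' * matunit x x' i j)"
    by (rule arg_cong)
  also have "\<dots> = (\<lambda>a a'. \<Sum>x\<in>UNIV. \<Sum>x'\<in>UNIV. M x x' * \<Phi> (matunit x x') a a')"
    by (simp add: lin_map_sum[OF assms] lin_map_scale[OF assms])
  finally show ?thesis .
qed

definition kraus_map :: "nat set \<Rightarrow> ('a \<Rightarrow> nat \<Rightarrow> 'x \<Rightarrow> complex)
    \<Rightarrow> ('x::finite \<Rightarrow> 'x \<Rightarrow> complex) \<Rightarrow> ('a \<Rightarrow> 'a \<Rightarrow> complex)" where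
  "kraus_map S u M = (\<lambda>a a'. \<Sum>x\<in>UNIV. \<Sum>x'\<in>UNIV. M x x' * (\<Sum>s\<in>S. cnj (u a s x) * u a' s x'))"

lemma kraus_map_matunit: "kraus_map S u (matunit x x') a a' = (\<Sum>s\<in>S. cnj (u a s x) * u a' s x')"
  unfolding kraus_map_def by (rule sum_matunit_mult)

lemma lin_map_kraus_map: "lin_map (kraus_map S u)"
  unfolding lin_map_def kraus_map_def
  by (auto simp: algebra_simps sum.distrib sum_distrib_left)

lemma trace_pres_kraus_map:
  fixes u :: "'a::finite \<Rightarrow> nat \<Rightarrow> 'x::finite \<Rightarrow> complex"
  assumes "isometry_on S u"
  shows "trace_pres (kraus_map S u)"
  unfolding trace_pres_def
proof
  fix M :: "'x \<Rightarrow> 'x \<Rightarrow> complex"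
  have "(\<Sum>a\<in>UNIV. kraus_map S u M a a)
      = (\<Sum>x\<in>UNIV. \<Sum>x'\<in>UNIV. M x x' * (\<Sum>a\<in>UNIV. \<Sum>s\<in>S. cnj (u a s x) * u a s x'))"
    unfolding kraus_map_def by (simp add: sum_distrib_left sum.swap[where A = "UNIV::'a set"])
  also have "\<dots> = (\<Sum>x\<in>UNIV. \<Sum>x'\<in>UNIV. M x x' * (if x = x' then 1 else 0))"
    using assms unfolding isometry_on_def by simp
  also have "\<dots> = (\<Sum>x\<in>UNIV. M x x)"
    by (simp add: if_distrib cong: if_cong)
  finally show "(\<Sum>a\<in>UNIV. kraus_map S u M a a) = (\<Sum>x\<in>UNIV. M x x)" .
qed

lemma qform_ampl_kraus_map:
  fixes u :: "'a::finite \<Rightarrow> nat \<Rightarrow> 'x::finite \<Rightarrow> complex"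
  assumes "finite S"
  shows "qform (UNIV \<times> {..<n}) (ampl (kraus_map S u) M) v =
     (\<Sum>s\<in>S. qform (UNIV \<times> {..<n}) M (\<lambda>(x, k). \<Sum>a\<in>UNIV. u a s x * v (a, k)))"
  unfolding qform_def
  apply (simp add: sum.cartesian_product' ampl_def kraus_map_def cnj_sum
      sum_distrib_left sum_distrib_right)
  apply (simp only: sum.cartesian_product)
  apply (rule sum.reindex_bij_witness[where j = "\<lambda>(a,k,a',k',x,x',s). (s,x,k,x',k',a',a)"
          and i = "\<lambda>(s,x,k,x',k',a',a). (a,k,a',k',x,x',s)"])
  apply (auto simp: mult_ac)
  done

lemma compl_pos_kraus_map:
  fixes u :: "'a::finite \<Rightarrow> nat \<Rightarrow> 'x::finite \<Rightarrow> complex"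
  assumes "finite S"
  shows "compl_pos (kraus_map S u)"
  unfolding compl_pos_def psd_on_iff_qform qform_ampl_kraus_map[OF assms]
proof (intro allI impI conjI)
  fix n :: nat and M :: "'x \<times> nat \<Rightarrow> 'x \<times> nat \<Rightarrow> complex" and v :: "'a \<times> nat \<Rightarrow> complex"
  assume M: "\<forall>w. qform (UNIV \<times> {..<n}) M w \<in> \<real> \<and> 0 \<le> Re (qform (UNIV \<times> {..<n}) M w)"
  then show "(\<Sum>s\<in>S. qform (UNIV \<times> {..<n}) M (\<lambda>(x, k). \<Sum>a\<in>UNIV. u a s x * v (a, k))) \<in> \<real>"
    by (intro sum_in_Reals) blast
  show "0 \<le> Re (\<Sum>s\<in>S. qform (UNIV \<times> {..<n}) M (\<lambda>(x, k). \<Sum>a\<in>UNIV. u a s x * v (a, k)))"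
    unfolding Re_sum using M by (intro sum_nonneg) blast
qed

lemma quantum_channel_kraus_map:
  fixes u :: "'a::finite \<Rightarrow> nat \<Rightarrow> 'x::finite \<Rightarrow> complex"
  assumes "finite S" "isometry_on S u"
  shows "quantum_channel (kraus_map S u)"
  unfolding quantum_channel_def
  using lin_map_kraus_map trace_pres_kraus_map[OF assms(2)] compl_pos_kraus_map[OF assms(1)] by blast

section \<open>The Choi matrix and the Kraus representation\<close>

definition choi_matrix :: "(('x \<Rightarrow> 'x \<Rightarrow> complex) \<Rightarrow> ('a \<Rightarrow> 'a \<Rightarrow> complex))
    \<Rightarrow> 'a \<times> 'x \<Rightarrow> 'a \<times> 'x \<Rightarrow> complex" where
  "choi_matrix \<Phi> = (\<lambda>(a, x) (a', x'). \<Phi> (matunit x x') a a')"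

text \<open>Complete positivity is applied to the rank-one matrix of the vector
  \<open>\<Sum>\<^sub>x e\<^sub>x \<otimes> e\<^sub>f\<^sub>(\<^sub>x\<^sub>)\<close>, where \<open>f\<close> enumerates \<open>'x\<close>; its image under \<open>ampl \<Phi>\<close> is the Choi
  matrix with the second factor relabelled by \<open>f\<close>.\<close>
lemma psd_on_choi_matrix:
  fixes \<Phi> :: "('x::finite \<Rightarrow> 'x \<Rightarrow> complex) \<Rightarrow> ('a::finite \<Rightarrow> 'a \<Rightarrow> complex)"
  assumes "compl_pos \<Phi>"
  shows "psd_on UNIV (choi_matrix \<Phi>)"
proof -
  define n where "n = card (UNIV :: 'x set)"
  obtain f where f: "bij_betw f (UNIV :: 'x set) {..<n}"
    using ex_bij_betw_finite_nat[of "UNIV :: 'x set"] by (auto simp: n_def lessThan_atLeast0)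
  then have "inj f" by (simp add: bij_betw_def)
  define \<omega> :: "'x \<times> nat \<Rightarrow> complex" where "\<omega> = (\<lambda>(x, k). if k = f x then 1 else 0)"
  have "psd_on (UNIV \<times> {..<n}) (ampl \<Phi> (\<lambda>i j. cnj (\<omega> i) * \<omega> j))"
    using assms psd_on_rank_one unfolding compl_pos_def by blast
  moreover have "bij_betw (map_prod (id :: 'a \<Rightarrow> 'a) f) UNIV (UNIV \<times> {..<n})"
    using bij_betw_map_prod[OF bij_betw_id[of "UNIV :: 'a set"] f] by simp
  ultimately have "psd_on UNIV (\<lambda>p q. ampl \<Phi> (\<lambda>i j. cnj (\<omega> i) * \<omega> j) (map_prod id f p) (map_prod id f q))"
    by (rule psd_on_reindex)
  moreover have "(\<lambda>z z'. cnj (\<omega> (z, f x)) * \<omega> (z', f x')) = matunit x x'" for x x'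
    using \<open>inj f\<close> by (auto simp: \<omega>_def matunit_def inj_eq intro!: ext)
  then have "choi_matrix \<Phi> = (\<lambda>p q. ampl \<Phi> (\<lambda>i j. cnj (\<omega> i) * \<omega> j) (map_prod id f p) (map_prod id f q))"
    by (auto simp: choi_matrix_def ampl_def intro!: ext)
  ultimately show ?thesis by simp
qed

theorem quantum_channel_kraus_representation:
  fixes \<Phi> :: "('x::finite \<Rightarrow> 'x \<Rightarrow> complex) \<Rightarrow> ('a::finite \<Rightarrow> 'a \<Rightarrow> complex)"
  assumes "quantum_channel \<Phi>"
  shows "\<exists>(m::nat) u. isometry_on {..<m} u \<and> \<Phi> = kraus_map {..<m} u"
proof -
  have lin: "lin_map \<Phi>" and cp: "compl_pos \<Phi>" and tp: "trace_pres \<Phi>"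
    using assms unfolding quantum_channel_def by auto
  obtain m :: nat and g where g: "\<forall>p q. choi_matrix \<Phi> p q = (\<Sum>s<m. cnj (g s p) * g s q)"
    using psd_on_gram_factorization[OF finite_UNIV psd_on_choi_matrix[OF cp]] by blast
  define u where "u = (\<lambda>a s x. g s (a, x))"
  have unit: "\<Phi> (matunit x x') a a' = (\<Sum>s<m. cnj (u a s x) * u a' s x')" for x x' a a'
    using g[rule_format, of "(a, x)" "(a', x')"] by (simp add: u_def choi_matrix_def)
  have "\<Phi> M = kraus_map {..<m} u M" for M
    unfolding lin_map_matunit_expansion[OF lin, of M] kraus_map_def unit ..
  then have "\<Phi> = kraus_map {..<m} u" ..
  moreover have "isometry_on {..<m} u"
    unfolding isometry_on_def
  proof (intro allI)
    fix x x' :: 'x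
    have "(\<Sum>a\<in>UNIV. \<Sum>s\<in>{..<m}. cnj (u a s x) * u a s x') = (\<Sum>z\<in>UNIV. matunit x x' z z)"
      using tp unfolding trace_pres_def by (simp flip: unit)
    also have "\<dots> = (if x = x' then 1 else 0)"
      by (auto simp: matunit_def intro!: sum.neutral)
    finally show "(\<Sum>a\<in>UNIV. \<Sum>s\<in>{..<m}. cnj (u a s x) * u a s x') = (if x = x' then 1 else 0)" .
  qed
  ultimately show ?thesis by blast
qed

section \<open>Direct sums of local isometries\<close>

lemma dsum_K_eq_Sigma: "dsum_K n S T = Sigma {..<n} (\<lambda>i. S i \<times> T i)"
  unfolding dsum_K_def by auto

lemma dsum_W_inner:
  fixes u :: "nat \<Rightarrow> 'a \<Rightarrow> nat \<Rightarrow> 'x \<Rightarrow> complex" and v :: "nat \<Rightarrow> 'b \<Rightarrow> nat \<Rightarrow> 'y \<Rightarrow> complex"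
  assumes fin: "\<forall>i<n. finite (S i) \<and> finite (T i)" and "h < n"
  shows "(\<Sum>k\<in>dsum_K n S T. cnj (dsum_W u v (a, b) (x, y) k h') * dsum_W u v (a', b') (x', y') k h)
     = (if h' = h then (\<Sum>s\<in>S h. cnj (u h a s x) * u h a' s x') * (\<Sum>t\<in>T h. cnj (v h b t y) * v h b' t y')
        else 0)"
proof -
  have "(\<Sum>k\<in>dsum_K n S T. cnj (dsum_W u v (a, b) (x, y) k h') * dsum_W u v (a', b') (x', y') k h)
      = (\<Sum>i<n. \<Sum>st\<in>S i \<times> T i. cnj (dsum_W u v (a, b) (x, y) (i, st) h') * dsum_W u v (a', b') (x', y') (i, st) h)"
    unfolding dsum_K_eq_Sigma using fin by (subst sum.Sigma) auto
  also have "\<dots> = (\<Sum>i<n. if i = h then (if h' = h then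
           (\<Sum>(s, t)\<in>S i \<times> T i. cnj (u i a s x * v i b t y) * (u i a' s x' * v i b' t y')) else 0) else 0)"
    by (intro sum.cong refl) (auto simp: dsum_W_def case_prod_beta intro!: sum.cong)
  also have "\<dots> = (if h' = h then
      (\<Sum>(s, t)\<in>S h \<times> T h. cnj (u h a s x * v h b t y) * (u h a' s x' * v h b' t y')) else 0)"
    using \<open>h < n\<close> by simp
  also have "\<dots> = (if h' = h then (\<Sum>s\<in>S h. cnj (u h a s x) * u h a' s x') * (\<Sum>t\<in>T h. cnj (v h b t y) * v h b' t y')
        else 0)"
    unfolding sum.cartesian_product' sum_product by (simp add: mult_ac)
  finally show ?thesis .
qed

lemma dsum_W_inner_state:
  fixes u :: "nat \<Rightarrow> 'a \<Rightarrow> nat \<Rightarrow> 'x \<Rightarrow> complex" and v :: "nat \<Rightarrow> 'b \<Rightarrow> nat \<Rightarrow> 'y \<Rightarrow> complex"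
  assumes fin: "\<forall>i<n. finite (S i) \<and> finite (T i)"
  shows "(\<Sum>h<n. \<Sum>h'<n. \<rho> h h' *
          (\<Sum>k\<in>dsum_K n S T. cnj (dsum_W u v (a, b) (x, y) k h') * dsum_W u v (a', b') (x', y') k h))
      = (\<Sum>h<n. \<rho> h h *
          ((\<Sum>s\<in>S h. cnj (u h a s x) * u h a' s x') * (\<Sum>t\<in>T h. cnj (v h b t y) * v h b' t y')))"
  using fin by (intro sum.cong refl)
    (simp add: dsum_W_inner if_distrib[where f = "\<lambda>z. _ * z"] cong: if_cong)

lemma gammaW_dsum:
  fixes u :: "nat \<Rightarrow> 'a::finite \<Rightarrow> nat \<Rightarrow> 'x::finite \<Rightarrow> complex"
    and v :: "nat \<Rightarrow> 'b::finite \<Rightarrow> nat \<Rightarrow> 'y::finite \<Rightarrow> complex"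
  assumes fin: "\<forall>i<n. finite (S i) \<and> finite (T i)"
  shows "gammaW (dsum_K n S T) {..<n} (dsum_W u v) \<rho>
       = (\<lambda>M c c'. \<Sum>i<n. \<rho> i i * map_tensor (kraus_map (S i) (u i)) (kraus_map (T i) (v i)) M c c')"
proof (intro ext)
  fix M :: "'x \<times> 'y \<Rightarrow> 'x \<times> 'y \<Rightarrow> complex" and c c' :: "'a \<times> 'b"
  obtain a b a' b' where c: "c = (a, b)" "c' = (a', b')" by (cases c, cases c')
  define K1 where "K1 = (\<lambda>h x x'. kraus_map (S h) (u h) (matunit x x') a a')"
  define K2 where "K2 = (\<lambda>h y y'. kraus_map (T h) (v h) (matunit y y') b b')"
  have "gammaW (dsum_K n S T) {..<n} (dsum_W u v) \<rho> M c c'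
      = (\<Sum>x\<in>UNIV. \<Sum>y\<in>UNIV. \<Sum>x'\<in>UNIV. \<Sum>y'\<in>UNIV.
          M (x, y) (x', y') * (\<Sum>h<n. \<rho> h h * (K1 h x x' * K2 h y y')))"
    unfolding gammaW_def c UNIV_Times_UNIV[symmetric] sum.cartesian_product'
    by (simp only: dsum_W_inner_state[OF fin] K1_def K2_def kraus_map_matunit)
  also have "\<dots> = (\<Sum>h<n. \<rho> h h * (\<Sum>x\<in>UNIV. \<Sum>x'\<in>UNIV. \<Sum>y\<in>UNIV. \<Sum>y'\<in>UNIV.
      M (x, y) (x', y') * K1 h x x' * K2 h y y'))"
    apply (simp only: sum_distrib_left sum_distrib_right sum.cartesian_product)
    apply (rule sum.reindex_bij_witness[where j = "\<lambda>(x, y, x', y', h). (h, x, x', y, y')"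
          and i = "\<lambda>(h, x, x', y, y'). (x, y, x', y', h)"])
    apply (auto simp: mult_ac)
    done
  also have "\<dots> = (\<Sum>i<n. \<rho> i i * map_tensor (kraus_map (S i) (u i)) (kraus_map (T i) (v i)) M c c')"
    by (simp add: map_tensor_def K1_def K2_def c)
  finally show "gammaW (dsum_K n S T) {..<n} (dsum_W u v) \<rho> M c c'
     = (\<Sum>i<n. \<rho> i i * map_tensor (kraus_map (S i) (u i)) (kraus_map (T i) (v i)) M c c')" .
qed

lemma QC_Rloc_subset_Q_loc:
  "(QC_Rloc :: (('x::finite \<times> 'y::finite \<Rightarrow> 'x \<times> 'y \<Rightarrow> complex)
     \<Rightarrow> ('a::finite \<times> 'b::finite \<Rightarrow> 'a \<times> 'b \<Rightarrow> complex)) set) \<subseteq> Q_loc"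
proof
  fix \<Gamma> :: "('x \<times> 'y \<Rightarrow> 'x \<times> 'y \<Rightarrow> complex) \<Rightarrow> ('a \<times> 'b \<Rightarrow> 'a \<times> 'b \<Rightarrow> complex)"
  assume "\<Gamma> \<in> QC_Rloc"
  then obtain n S T u v \<rho> where \<Gamma>: "\<Gamma> = gammaW (dsum_K n S T) {..<n} (dsum_W u v) \<rho>"
    and iso: "\<forall>i<n. finite (S i) \<and> finite (T i) \<and> isometry_on (S i) (u i) \<and> isometry_on (T i) (v i)"
    and \<rho>: "density_on {..<n} \<rho>"
    unfolding QC_Rloc_def by blast
  have fin: "\<forall>i<n. finite (S i) \<and> finite (T i)"
    using iso by blast
  have psd: "psd_on {..<n} \<rho>" and trace: "(\<Sum>h<n. \<rho> h h) = 1"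
    using \<rho> unfolding density_on_def by auto
  define w where "w = (\<lambda>i. Re (\<rho> i i))"
  have \<rho>_diag: "\<rho> i i = complex_of_real (w i)" if "i < n" for i
    using psd_on_diag(1)[OF finite_lessThan psd] that by (simp add: w_def)
  have "\<forall>i<n. 0 \<le> w i \<and> quantum_channel (kraus_map (S i) (u i)) \<and> quantum_channel (kraus_map (T i) (v i))"
    using psd_on_diag(2)[OF finite_lessThan psd] iso by (simp add: w_def quantum_channel_kraus_map)
  moreover have "(\<Sum>i<n. w i) = 1"
    using arg_cong[OF trace, of Re] by (simp add: w_def)
  moreover have "\<Gamma> = (\<lambda>M c c'. \<Sum>i<n. complex_of_real (w i) *
      map_tensor (kraus_map (S i) (u i)) (kraus_map (T i) (v i)) M c c')"
    unfolding \<Gamma> gammaW_dsum[OF fin] by (intro ext sum.cong refl) (simp add: \<rho>_diag)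
  ultimately show "\<Gamma> \<in> Q_loc"
    unfolding Q_loc_def mem_Collect_eq
    by (intro exI[of _ n] exI[of _ w] exI[of _ "\<lambda>i. kraus_map (S i) (u i)"]
        exI[of _ "\<lambda>i. kraus_map (T i) (v i)"]) simp
qed

lemma Q_loc_subset_QC_Rloc:
  "(Q_loc :: (('x::finite \<times> 'y::finite \<Rightarrow> 'x \<times> 'y \<Rightarrow> complex)
     \<Rightarrow> ('a::finite \<times> 'b::finite \<Rightarrow> 'a \<times> 'b \<Rightarrow> complex)) set) \<subseteq> QC_Rloc"
proof
  fix \<Gamma> :: "('x \<times> 'y \<Rightarrow> 'x \<times> 'y \<Rightarrow> complex) \<Rightarrow> ('a \<times> 'b \<Rightarrow> 'a \<times> 'b \<Rightarrow> complex)"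
  assume "\<Gamma> \<in> Q_loc"
  then obtain n w and \<Phi> :: "nat \<Rightarrow> ('x \<Rightarrow> 'x \<Rightarrow> complex) \<Rightarrow> ('a \<Rightarrow> 'a \<Rightarrow> complex)"
    and \<Psi> :: "nat \<Rightarrow> ('y \<Rightarrow> 'y \<Rightarrow> complex) \<Rightarrow> ('b \<Rightarrow> 'b \<Rightarrow> complex)"
    where channels: "\<forall>i<n. 0 \<le> w i \<and> quantum_channel (\<Phi> i) \<and> quantum_channel (\<Psi> i)"
      and weights: "(\<Sum>i<n. w i) = 1"
      and \<Gamma>: "\<Gamma> = (\<lambda>M c c'. \<Sum>i<n. complex_of_real (w i) * map_tensor (\<Phi> i) (\<Psi> i) M c c')"
    unfolding Q_loc_def by blast
  have "\<forall>i. \<exists>m u. i < n \<longrightarrow> isometry_on {..<m} u \<and> \<Phi> i = kraus_map {..<m} u"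
    using channels quantum_channel_kraus_representation by blast
  then obtain mS u where u: "\<And>i. i < n \<Longrightarrow> isometry_on {..<mS i} (u i) \<and> \<Phi> i = kraus_map {..<mS i} (u i)"
    by metis
  have "\<forall>i. \<exists>m v. i < n \<longrightarrow> isometry_on {..<m} v \<and> \<Psi> i = kraus_map {..<m} v"
    using channels quantum_channel_kraus_representation by blast
  then obtain mT v where v: "\<And>i. i < n \<Longrightarrow> isometry_on {..<mT i} (v i) \<and> \<Psi> i = kraus_map {..<mT i} (v i)"
    by metis
  define \<rho> where "\<rho> = (\<lambda>h h'. if h = h' then complex_of_real (w h) else 0)"
  have fin: "\<forall>i<n. finite {..<mS i} \<and> finite {..<mT i}"
    by simp
  have "\<Gamma> = gammaW (dsum_K n (\<lambda>i. {..<mS i}) (\<lambda>i. {..<mT i})) {..<n} (dsum_W u v) \<rho>"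
    unfolding \<Gamma> gammaW_dsum[OF fin]
    by (intro ext sum.cong refl) (simp add: u v \<rho>_def)
  moreover have "density_on {..<n} \<rho>"
    unfolding \<rho>_def using density_on_diag channels weights by blast
  ultimately show "\<Gamma> \<in> QC_Rloc"
    unfolding QC_Rloc_def mem_Collect_eq using u v
    by (intro exI[of _ n] exI[of _ "\<lambda>i. {..<mS i}"] exI[of _ "\<lambda>i. {..<mT i}"] exI[of _ u] exI[of _ v]
        exI[of _ \<rho>]) simp
qed

theorem proposition5p1:
  shows "(QC_Rloc :: (('x::finite \<times> 'y::finite \<Rightarrow> 'x \<times> 'y \<Rightarrow> complex)
           \<Rightarrow> ('a::finite \<times> 'b::finite \<Rightarrow> 'a \<times> 'b \<Rightarrow> complex)) set) = Q_loc"
  using QC_Rloc_subset_Q_loc Q_loc_subset_QC_Rloc by (rule equalityI)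

end
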